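(* Let $n,k$ be integers with $2<2k\le n$ such that the integer program $( * )$ has a solution but no trivial solution, and let $2r+1$ be the optimal value of $( * )$ (so that $g_{odd}(\mathrm{Pet}(n,k))=2r+3$). Then there is no homomorphism $\mathrm{Pet}(n,k)\to C_{2r+3}$.
   Context: For integers $n,k$ with $2<2k\le n$, the generalized Petersen graph $\mathrm{Pet}(n,k)$ has vertex set $\{u_0,\dots,u_{n-1}\}\cup\{v_0,\dots,v_{n-1}\}$ and edge set $\{u_iu_{i+1}\}\cup\{u_iv_i\}\cup\{v_iv_{i+k}\}$, indices modulo $n$. The integer program $( * )$ is: minimize $\mathsf{u}+\mathsf{v}_++\mathsf{v}_-$ over integers $\mathsf{u},\mathsf{v}_+,\mathsf{v}_-,r\ge 0$ and $t\in\mathbb{Z}$ subject to $\mathsf{u}+k(\mathsf{v}_+-\mathsf{v}_-)=tn$ and $\mathsf{u}+\mathsf{v}_++\mathsf{v}_-=2r+1$. A solution is a minimizer; it is trivial if $\mathsf{u}=0$ or $\mathsf{v}_++\mathsf{v}_-=0$. $C_m$ is the cycle of length $m$; $g_{odd}$ is the odd girth. A homomorphism $G\to H$ is a map $V(G)\to V(H)$ sending edges to edges. *)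

theory Defs
  imports Main
begin

(* Generalized Petersen graph Pet(n,k): vertex (False,i) is u_i, (True,i) is v_i, 0 <= i < n. *)
definition pet_vertices :: "nat \<Rightarrow> (bool \<times> nat) set" where
  "pet_vertices n = {(b, i). i < n}"

definition pet_adj :: "nat \<Rightarrow> nat \<Rightarrow> bool \<times> nat \<Rightarrow> bool \<times> nat \<Rightarrow> bool" where
  "pet_adj n k x y \<longleftrightarrow> x \<in> pet_vertices n \<and> y \<in> pet_vertices n \<and>
     (case (x, y) of
        ((False, i), (False, j)) \<Rightarrow> j = (i + 1) mod n \<or> i = (j + 1) mod n
      | ((False, i), (True, j)) \<Rightarrow> i = j
      | ((True, i), (False, j)) \<Rightarrow> i = j
      | ((True, i), (True, j)) \<Rightarrow> j = (i + k) mod n \<or> i = (j + k) mod n)"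

definition cycle_adj :: "nat \<Rightarrow> nat \<Rightarrow> nat \<Rightarrow> bool" where
  "cycle_adj m a b \<longleftrightarrow> a < m \<and> b < m \<and> (b = (a + 1) mod m \<or> a = (b + 1) mod m)"

definition pet_cycle_hom :: "nat \<Rightarrow> nat \<Rightarrow> nat \<Rightarrow> (bool \<times> nat \<Rightarrow> nat) \<Rightarrow> bool" where
  "pet_cycle_hom n k m f \<longleftrightarrow>
     (\<forall>x\<in>pet_vertices n. f x < m) \<and>
     (\<forall>x y. pet_adj n k x y \<longrightarrow> cycle_adj m (f x) (f y))"

definition ip_feasible :: "nat \<Rightarrow> nat \<Rightarrow> nat \<Rightarrow> nat \<Rightarrow> nat \<Rightarrow> nat \<Rightarrow> int \<Rightarrow> bool" where
  "ip_feasible n k u vp vm r t \<longleftrightarrow>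
     int u + int k * (int vp - int vm) = t * int n \<and> u + vp + vm = 2 * r + 1"

definition ip_solution :: "nat \<Rightarrow> nat \<Rightarrow> nat \<Rightarrow> nat \<Rightarrow> nat \<Rightarrow> nat \<Rightarrow> int \<Rightarrow> bool" where
  "ip_solution n k u vp vm r t \<longleftrightarrow> ip_feasible n k u vp vm r t \<and>
     (\<forall>u' vp' vm' r' t'. ip_feasible n k u' vp' vm' r' t' \<longrightarrow> u + vp + vm \<le> u' + vp' + vm')"

definition ip_trivial :: "nat \<Rightarrow> nat \<Rightarrow> nat \<Rightarrow> bool" where
  "ip_trivial u vp vm \<longleftrightarrow> u = 0 \<or> vp + vm = 0"

end

theory Submission
  imports Defs
begin

text \<open>
  A feasible point of the integer program gives, for every start index j, a closed walk of odd
  length 2r+3 in Pet(n,k): u steps along the outer cycle from u_j to u_(j+u), a spoke, v+ steps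
  of +k and v- steps of -k along the inner cycles back to v_j, and the spoke to u_j.
  A closed walk in C_m with P forward steps out of L has net displacement 2P - L, a multiple
  of m; for L = m odd this forces P = 0 or P = m, i.e. all steps point the same way.
  Orienting every spoke by the image of a homomorphism, the walks show that the orientation
  flips under the shift j \<mapsto> j+u and, when u \<ge> 2, is invariant under j \<mapsto> j+1,
  which is absurd; when u = 1 it alternates, so n is even, contradicting the parity of
  1 + k(v+ - v-) = t n.
\<close>

definition cycle_fwd :: "nat \<Rightarrow> nat \<Rightarrow> nat \<Rightarrow> bool" where
  "cycle_fwd m a b \<longleftrightarrow> b = (a + 1) mod m"

lemma cycle_adj_iff_fwd:
  "cycle_adj m a b \<longleftrightarrow> a < m \<and> b < m \<and> (cycle_fwd m a b \<or> cycle_fwd m b a)"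
  unfolding cycle_adj_def cycle_fwd_def by blast

lemma cycle_fwd_dvd: "cycle_fwd m a b \<Longrightarrow> int m dvd int b - (int a + 1)"
  unfolding cycle_fwd_def by (simp add: zmod_int mod_eq_dvd_iff[symmetric] ac_simps)

lemma cycle_adj_fwd_flip:
  assumes "3 \<le> m" and "cycle_adj m a b"
  shows "cycle_fwd m b a \<longleftrightarrow> \<not> cycle_fwd m a b"
proof -
  have "\<not> (cycle_fwd m a b \<and> cycle_fwd m b a)"
  proof
    assume "cycle_fwd m a b \<and> cycle_fwd m b a"
    then have "int m dvd (int b - (int a + 1)) + (int a - (int b + 1))"
      by (intro dvd_add cycle_fwd_dvd) auto
    then have "int m dvd 2" by (simp add: algebra_simps)
    then show False using zdvd_imp_le[of "int m" 2] \<open>3 \<le> m\<close> by simp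
  qed
  then show ?thesis using assms(2) by (auto simp: cycle_adj_iff_fwd)
qed

lemma closed_walk_in_cycle_winding:
  fixes g :: "nat \<Rightarrow> nat"
  assumes step: "\<forall>i<L. cycle_fwd m (g i) (g (Suc i)) \<or> cycle_fwd m (g (Suc i)) (g i)"
    and closed: "g L = g 0"
  shows "int m dvd 2 * int (card {i. i < L \<and> cycle_fwd m (g i) (g (Suc i))}) - int L"
proof -
  define P where "P j = card {i. i < j \<and> cycle_fwd m (g i) (g (Suc i))}" for j
  have P_Suc: "P (Suc j) = P j + (if cycle_fwd m (g j) (g (Suc j)) then 1 else 0)" for j
  proof -
    have "{i. i < Suc j \<and> cycle_fwd m (g i) (g (Suc i))} =
      (if cycle_fwd m (g j) (g (Suc j)) then insert j else id)
        {i. i < j \<and> cycle_fwd m (g i) (g (Suc i))}"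
      by (auto simp: less_Suc_eq)
    then show ?thesis unfolding P_def by simp
  qed
  have position: "int m dvd int (g j) - (int (g 0) + 2 * int (P j) - int j)" if "j \<le> L" for j
    using that
  proof (induction j)
    case 0
    then show ?case by (simp add: P_def)
  next
    case (Suc j)
    then have IH: "int m dvd int (g j) - (int (g 0) + 2 * int (P j) - int j)" by simp
    show ?case
    proof (cases "cycle_fwd m (g j) (g (Suc j))")
      case True
      have "int m dvd (int (g (Suc j)) - (int (g j) + 1))
          + (int (g j) - (int (g 0) + 2 * int (P j) - int j))"
        using cycle_fwd_dvd[OF True] IH by (rule dvd_add)
      then show ?thesis using True by (simp add: P_Suc algebra_simps)
    next
      case False
      then have "cycle_fwd m (g (Suc j)) (g j)" using step Suc.prems by (auto simp: Suc_le_eq)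
      have "int m dvd (int (g j) - (int (g 0) + 2 * int (P j) - int j))
          - (int (g j) - (int (g (Suc j)) + 1))"
        using IH cycle_fwd_dvd[OF \<open>cycle_fwd m (g (Suc j)) (g j)\<close>] by (rule dvd_diff)
      then show ?thesis using False by (simp add: P_Suc algebra_simps)
    qed
  qed
  show ?thesis using position[of L] closed by (simp add: P_def dvd_diff_commute)
qed

lemma odd_closed_walk_in_cycle_unidirectional:
  fixes g :: "nat \<Rightarrow> nat"
  assumes "odd m"
    and step: "\<forall>i<m. cycle_fwd m (g i) (g (Suc i)) \<or> cycle_fwd m (g (Suc i)) (g i)"
    and closed: "g m = g 0"
  shows "(\<forall>i<m. cycle_fwd m (g i) (g (Suc i))) \<or> (\<forall>i<m. \<not> cycle_fwd m (g i) (g (Suc i)))"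
proof -
  define F where "F = {i. i < m \<and> cycle_fwd m (g i) (g (Suc i))}"
  have "int m dvd 2 * int (card F) - int m"
    unfolding F_def using step closed by (rule closed_walk_in_cycle_winding)
  then have "int m dvd 2 * int (card F)"
    using dvd_add[OF _ dvd_refl] by fastforce
  then have "m dvd 2 * card F" by (metis of_nat_dvd_iff of_nat_mult of_nat_numeral)
  then have "m dvd card F"
    using \<open>odd m\<close> by (metis coprime_dvd_mult_right_iff coprime_right_2_iff_odd)
  moreover have F_sub: "F \<subseteq> {..<m}" by (auto simp: F_def)
  then have "card F \<le> m" using card_mono[of "{..<m}" F] by simp
  ultimately have "card F = 0 \<or> card F = m"
    by (metis dvd_imp_le le_antisym neq0_conv)
  moreover have "finite F" using F_sub finite_subset by blast
  ultimately have "F = {} \<or> F = {..<m}"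
    using card_subset_eq[OF finite_lessThan F_sub] by auto
  then show ?thesis by (auto simp: F_def)
qed

lemma hom_to_odd_cycle_closed_walk_steps_agree:
  fixes adj :: "'a \<Rightarrow> 'a \<Rightarrow> bool" and f :: "'a \<Rightarrow> nat" and w :: "nat \<Rightarrow> 'a"
  assumes "odd m" "3 \<le> m"
    and hom: "\<forall>x y. adj x y \<longrightarrow> cycle_adj m (f x) (f y)"
    and walk: "\<forall>i<m. adj (w i) (w (Suc i))" and closed: "w m = w 0"
    and "i < m" "i' < m"
  shows "cycle_fwd m (f (w i)) (f (w (Suc i))) \<longleftrightarrow> cycle_fwd m (f (w i')) (f (w (Suc i')))"
proof -
  have adj_img: "cycle_adj m (f (w i)) (f (w (Suc i)))" if "i < m" for i
    using hom walk that by blast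
  have "(\<forall>i<m. cycle_fwd m (f (w i)) (f (w (Suc i)))) \<or>
        (\<forall>i<m. \<not> cycle_fwd m (f (w i)) (f (w (Suc i))))"
    using \<open>odd m\<close> adj_img closed
    by (intro odd_closed_walk_in_cycle_unidirectional) (auto simp: cycle_adj_iff_fwd)
  then show ?thesis using \<open>i < m\<close> \<open>i' < m\<close> by blast
qed

definition outer :: "nat \<Rightarrow> int \<Rightarrow> bool \<times> nat" where
  "outer n x = (False, nat (x mod int n))"

definition inner :: "nat \<Rightarrow> int \<Rightarrow> bool \<times> nat" where
  "inner n x = (True, nat (x mod int n))"

lemma nat_mod_add:
  assumes "0 < n" shows "nat ((x + int c) mod int n) = (nat (x mod int n) + c) mod n"
proof -
  have "int ((nat (x mod int n) + c) mod n) = (x mod int n + int c) mod int n"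
    using assms by (simp add: zmod_int)
  also have "\<dots> = (x + int c) mod int n" by (simp add: mod_add_left_eq)
  finally show ?thesis by (metis nat_int)
qed

lemma outer_add_period [simp]: "outer n (x + t * int n) = outer n x"
  and inner_add_period [simp]: "inner n (x + t * int n) = inner n x"
  by (simp_all add: outer_def inner_def)

lemma pet_adj_sym: "pet_adj n k x y \<Longrightarrow> pet_adj n k y x"
  unfolding pet_adj_def by (auto split: bool.splits prod.splits)

lemma pet_adj_outer: "0 < n \<Longrightarrow> pet_adj n k (outer n x) (outer n (x + 1))"
  using nat_mod_add[of n x 1]
  by (simp add: pet_adj_def pet_vertices_def outer_def nat_less_iff)

lemma pet_adj_spoke: "0 < n \<Longrightarrow> pet_adj n k (outer n x) (inner n x)"
  by (simp add: pet_adj_def pet_vertices_def outer_def inner_def nat_less_iff)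

lemma pet_adj_inner: "0 < n \<Longrightarrow> pet_adj n k (inner n x) (inner n (x + int k))"
  using nat_mod_add[of n x k]
  by (simp add: pet_adj_def pet_vertices_def inner_def nat_less_iff)

text \<open>Displacement after l steps of the inner path: v+ steps of +k, then steps of -k.\<close>

definition inner_offset :: "nat \<Rightarrow> nat \<Rightarrow> nat \<Rightarrow> int" where
  "inner_offset k vp l = int k * (int (min l vp) - int (l - vp))"

definition pet_closed_walk :: "nat \<Rightarrow> nat \<Rightarrow> nat \<Rightarrow> nat \<Rightarrow> nat \<Rightarrow> int \<Rightarrow> nat \<Rightarrow> bool \<times> nat" where
  "pet_closed_walk n k u vp vm j i =
     (if i \<le> u then outer n (j + int i)
      else if i \<le> u + 1 + vp + vm then inner n (j + int u + inner_offset k vp (i - u - 1))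
      else outer n j)"

lemma pet_closed_walk_outer: "i \<le> u \<Longrightarrow> pet_closed_walk n k u vp vm j i = outer n (j + int i)"
  and pet_closed_walk_spoke: "pet_closed_walk n k u vp vm j (Suc u) = inner n (j + int u)"
  and pet_closed_walk_last: "pet_closed_walk n k u vp vm j (u + vp + vm + 2) = outer n j"
  by (simp_all add: pet_closed_walk_def inner_offset_def)

lemma pet_closed_walk_return:
  assumes "int u + int k * (int vp - int vm) = t * int n"
  shows "pet_closed_walk n k u vp vm j (u + 1 + vp + vm) = inner n j"
proof -
  have offset: "j + int u + inner_offset k vp (vp + vm) = j + t * int n"
    using assms by (simp add: inner_offset_def algebra_simps)
  have "pet_closed_walk n k u vp vm j (u + 1 + vp + vm) = inner n (j + int u + inner_offset k vp (vp + vm))"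
    by (simp add: pet_closed_walk_def)
  also have "\<dots> = inner n j" unfolding offset by simp
  finally show ?thesis .
qed

lemma pet_closed_walk_adj:
  assumes "0 < n" and feasible: "int u + int k * (int vp - int vm) = t * int n"
    and "i < u + vp + vm + 2"
  shows "pet_adj n k (pet_closed_walk n k u vp vm j i) (pet_closed_walk n k u vp vm j (Suc i))"
proof -
  let ?w = "pet_closed_walk n k u vp vm j"
  consider "i < u" | "i = u" | "u < i" "Suc i \<le> u + 1 + vp + vm" | "i = u + 1 + vp + vm"
    using assms(3) by linarith
  then show ?thesis
  proof cases
    case 1
    have "?w (Suc i) = outer n (j + int i + 1)"
      using 1 pet_closed_walk_outer[of "Suc i" u n k vp vm j] by (simp add: ac_simps)
    moreover have "?w i = outer n (j + int i)" using 1 by (simp add: pet_closed_walk_outer)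
    ultimately show ?thesis using pet_adj_outer[OF \<open>0 < n\<close>] by simp
  next
    case 2
    then show ?thesis
      using pet_adj_spoke[OF \<open>0 < n\<close>] by (simp add: pet_closed_walk_outer pet_closed_walk_spoke)
  next
    case 3
    define l where "l = i - u - 1"
    define x where "x = j + int u + inner_offset k vp l"
    define y where "y = j + int u + inner_offset k vp (Suc l)"
    have walk: "?w i = inner n x" "?w (Suc i) = inner n y"
      using 3 by (simp_all add: pet_closed_walk_def l_def x_def y_def Suc_diff_Suc)
    show ?thesis
    proof (cases "l < vp")
      case True
      then have "y = x + int k" by (simp add: x_def y_def inner_offset_def algebra_simps)
      then show ?thesis unfolding walk by (simp add: pet_adj_inner[OF \<open>0 < n\<close>])
    next
      case False
      then have "x = y + int k" by (simp add: x_def y_def inner_offset_def algebra_simps Suc_diff_le)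
      then show ?thesis unfolding walk by (simp add: pet_adj_sym pet_adj_inner[OF \<open>0 < n\<close>])
    qed
  next
    case 4
    then have "?w i = inner n j" using pet_closed_walk_return[OF feasible] by simp
    moreover have "Suc i = u + vp + vm + 2" using 4 by simp
    then have "?w (Suc i) = outer n j" by (simp only: pet_closed_walk_last)
    ultimately show ?thesis by (simp add: pet_adj_sym pet_adj_spoke[OF \<open>0 < n\<close>])
  qed
qed

lemma shift_flip_forces_one:
  fixes s ob :: "int \<Rightarrow> bool"
  assumes flip: "\<And>j. s (j + int u) \<longleftrightarrow> \<not> s j"
    and steps: "\<And>j i. i < u \<Longrightarrow> ob (j + int i) \<longleftrightarrow> s (j + int u)"
  shows "u = 1"
proof (rule ccontr)
  assume "u \<noteq> 1"
  moreover have "u \<noteq> 0"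
  proof
    assume "u = 0"
    then show False using flip[of 0] by simp
  qed
  ultimately have "2 \<le> u" by simp
  have step: "s (x + 1) = s x" for x
    using steps[of 1 "x - int u"] steps[of 0 "x - int u + 1"] \<open>2 \<le> u\<close>
    by (simp add: algebra_simps)
  have "s (x + int l) = s x" for x l
  proof (induction l)
    case (Suc l)
    have "s (x + int (Suc l)) = s (x + int l + 1)" by (simp add: ac_simps)
    also have "\<dots> = s x" using step Suc by simp
    finally show ?case .
  qed simp
  then show False using flip[of 0] by (metis add_0)
qed

lemma alternating_periodic_even:
  fixes s :: "int \<Rightarrow> bool"
  assumes alt: "\<And>x. s (x + 1) \<longleftrightarrow> \<not> s x" and period: "s (int n) = s 0"
  shows "even n"
proof -
  have "s (int l) \<longleftrightarrow> (if even l then s 0 else \<not> s 0)" for l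
    by (induction l) (simp_all add: alt[of "int _", simplified add.commute])
  then show ?thesis using period by (auto split: if_splits)
qed

lemma ip_feasible_one_outer_step_odd: "ip_feasible n k 1 vp vm r t \<Longrightarrow> odd n"
proof
  assume "ip_feasible n k 1 vp vm r t" "even n"
  then have loop: "1 + int k * (int vp - int vm) = t * int n" and "vp + vm = 2 * r"
    by (simp_all add: ip_feasible_def)
  then have "int vp + int vm = 2 * int r" by (metis of_nat_add of_nat_mult of_nat_numeral)
  then have vp: "int vp = 2 * int r - int vm" by linarith
  have "t * int n = 2 * (int k * (int r - int vm)) + 1"
    using loop unfolding vp by (simp add: algebra_simps)
  then have "odd (t * int n)" by simp
  then show False using \<open>even n\<close> by simp
qed

theorem no_hom_to_cycle_of_feasible:
  assumes "0 < n" and feasible: "ip_feasible n k u vp vm r t"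
  shows "\<not> (\<exists>f. pet_cycle_hom n k (2 * r + 3) f)"
proof
  define m where "m = 2 * r + 3"
  assume "\<exists>f. pet_cycle_hom n k (2 * r + 3) f"
  then obtain f where hom: "\<forall>x y. pet_adj n k x y \<longrightarrow> cycle_adj m (f x) (f y)"
    unfolding pet_cycle_hom_def m_def by blast
  have "odd m" "3 \<le> m" by (simp_all add: m_def)
  have m: "m = u + vp + vm + 2" and loop: "int u + int k * (int vp - int vm) = t * int n"
    using feasible by (simp_all add: ip_feasible_def m_def)
  let ?w = "pet_closed_walk n k u vp vm"
  let ?fwd = "\<lambda>x y. cycle_fwd m (f x) (f y)"
  have walk: "\<forall>i<m. pet_adj n k (?w j i) (?w j (Suc i))" for j
    using pet_closed_walk_adj[OF \<open>0 < n\<close> loop] m by simp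
  have closed: "?w j m = ?w j 0" for j
    unfolding m pet_closed_walk_last by (simp add: pet_closed_walk_outer)
  have agree: "?fwd (?w j i) (?w j (Suc i)) \<longleftrightarrow> ?fwd (?w j i') (?w j (Suc i'))"
    if "i < m" "i' < m" for j i i'
    using \<open>odd m\<close> \<open>3 \<le> m\<close> hom walk closed that by (rule hom_to_odd_cycle_closed_walk_steps_agree)
  define s where "s x \<longleftrightarrow> ?fwd (outer n x) (inner n x)" for x
  have flip: "s (j + int u) \<longleftrightarrow> \<not> s j" for j
  proof -
    have "cycle_adj m (f (outer n j)) (f (inner n j))"
      using hom pet_adj_spoke[OF \<open>0 < n\<close>] by blast
    then have "?fwd (inner n j) (outer n j) \<longleftrightarrow> \<not> s j"
      unfolding s_def using \<open>3 \<le> m\<close> by (rule cycle_adj_fwd_flip[rotated])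
    moreover have "?w j (u + 1 + vp + vm) = inner n j" "?w j (Suc (u + 1 + vp + vm)) = outer n j"
      using pet_closed_walk_return[OF loop] closed m by (simp_all add: pet_closed_walk_outer)
    ultimately show ?thesis
      using agree[of u "u + 1 + vp + vm" j] m
      by (simp add: s_def pet_closed_walk_outer pet_closed_walk_spoke)
  qed
  have outer_steps: "?fwd (outer n (j + int i)) (outer n (j + int i + 1)) \<longleftrightarrow> s (j + int u)"
    if "i < u" for j i
    using agree[of i u j] that m
    by (simp add: s_def pet_closed_walk_outer pet_closed_walk_spoke ac_simps)
  have "u = 1"
    by (rule shift_flip_forces_one[of s u "\<lambda>x. ?fwd (outer n x) (outer n (x + 1))"])
       (simp_all add: flip outer_steps)
  moreover have "s (int n) = s 0" by (simp add: s_def outer_def inner_def)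
  ultimately have "even n" using flip by (intro alternating_periodic_even[of s]) simp_all
  then show False using feasible \<open>u = 1\<close> ip_feasible_one_outer_step_odd by blast
qed

theorem mainTheorem18:
  fixes n k u vp vm r :: nat and t :: int
  assumes "2 < 2 * k" and "2 * k \<le> n"
    and "\<forall>u' vp' vm' r' t'. ip_solution n k u' vp' vm' r' t' \<longrightarrow> \<not> ip_trivial u' vp' vm'"
    and "ip_solution n k u vp vm r t"
  shows "\<not> (\<exists>f. pet_cycle_hom n k (2 * r + 3) f)"
  using assms(1,2,4) by (intro no_hom_to_cycle_of_feasible) (auto simp: ip_solution_def)

end
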